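(* Let $A$ be a set of vertices of the path $P_n$ with $2\le |A|\le n$. Then the output of $\textsc{Ascending Local Search}(P_n,W,A)$ is a maximizer of $W$ on $P_n$.
   Context: $P_n$ is the path on vertices $\{1,\dots,n\}$. $W(X)=\sum_{\{u,v\}\subseteq X,u\ne v}d(u,v)$ over unordered pairs, $d$ shortest-path distance; $X$ is a maximizer of $W$ if $W(X)=\max\{W(B):|B|=|X|\}$. A perturbation of $X$ in a graph $G$ is a set $(X\setminus\{u\})\cup\{v\}$ with $u\in X$, $v\in V(G)\setminus X$ and $uv\in E(G)$. $\textsc{Ascending Local Search}(G,F,A)$: set $X=A$; list all perturbations of $X$ in $G$ as $L(0),L(1),\dots$; if $F(L(i))>F(X)$ for some $i$, replace $X$ by $L(j)$ for the least such $j$ and repeat; otherwise (all perturbations satisfy $F(L(i))\le F(X)$) return $X$. *)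

theory Defs
  imports Main
begin

definition path_vertices :: "nat \<Rightarrow> nat set" where
  "path_vertices n = {1..n}"

definition path_edge :: "nat \<Rightarrow> nat \<Rightarrow> nat \<Rightarrow> bool" where
  "path_edge n u v \<longleftrightarrow> u \<in> {1..n} \<and> v \<in> {1..n} \<and> (v = u + 1 \<or> u = v + 1)"

text \<open>Shortest-path distance in P_n between vertices u, v is |u - v|.\<close>
definition path_dist :: "nat \<Rightarrow> nat \<Rightarrow> nat" where
  "path_dist u v = (if u \<le> v then v - u else u - v)"

definition W :: "nat set \<Rightarrow> nat" where
  "W X = (\<Sum>u\<in>X. \<Sum>v\<in>{v\<in>X. u < v}. path_dist u v)"

definition is_maximizer :: "nat \<Rightarrow> nat set \<Rightarrow> bool" where
  "is_maximizer n X \<longleftrightarrow> X \<subseteq> path_vertices n \<and>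
     (\<forall>B. B \<subseteq> path_vertices n \<and> card B = card X \<longrightarrow> W B \<le> W X)"

definition perturbations :: "nat \<Rightarrow> nat set \<Rightarrow> nat set set" where
  "perturbations n X = {(X - {u}) \<union> {v} | u v.
      u \<in> X \<and> v \<in> path_vertices n - X \<and> path_edge n u v}"

definition valid_listing :: "nat \<Rightarrow> (nat set \<Rightarrow> nat set list) \<Rightarrow> bool" where
  "valid_listing n L \<longleftrightarrow> (\<forall>X. distinct (L X) \<and> set (L X) = perturbations n X)"

text \<open>Ascending Local Search(P_n, F, A) with listing L: the relation
  als_returns n F L X R means that running the procedure from X returns R.\<close>
inductive als_returns ::
  "nat \<Rightarrow> (nat set \<Rightarrow> nat) \<Rightarrow> (nat set \<Rightarrow> nat set list) \<Rightarrow> nat set \<Rightarrow> nat set \<Rightarrow> bool"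
  for n F L where
  stop: "(\<forall>i < length (L X). F (L X ! i) \<le> F X) \<Longrightarrow> als_returns n F L X X"
| step: "\<lbrakk> j < length (L X); F (L X ! j) > F X;
          \<forall>i < j. F (L X ! i) \<le> F X;
          als_returns n F L (L X ! j) R \<rbrakk> \<Longrightarrow> als_returns n F L X R"

end

theory Submission imports Defs begin

text \<open>Cutting the path between t and t + 1 splits X into left_card X t and right_card X t
  points, and W X is the sum of these products over all cuts.  Moving a point of X across one cut
  changes only that cut's product, so at a local maximum the two sides of a cut differ by at most
  one unless the larger side is completely filled.  In either case no set of the same size has a
  larger product at that cut, hence a local maximum is a global one.  The search terminates since
  W strictly increases along it and takes finitely many values.\<close>

definition left_card :: "nat set \<Rightarrow> nat \<Rightarrow> nat" where
  "left_card X t = card {x \<in> X. x \<le> t}"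

definition right_card :: "nat set \<Rightarrow> nat \<Rightarrow> nat" where
  "right_card X t = card {x \<in> X. t < x}"

lemma left_card_add_right_card:
  assumes "finite X"
  shows "left_card X t + right_card X t = card X"
proof -
  have "X = {x \<in> X. x \<le> t} \<union> {x \<in> X. t < x}" by auto
  then show ?thesis
    unfolding left_card_def right_card_def using assms
    by (metis (no_types, lifting) card_Un_disjoint disjoint_iff finite_Un mem_Collect_eq not_le)
qed

lemma path_dist_eq_card_cuts:
  assumes "1 \<le> u" "u < v" "v \<le> n"
  shows "path_dist u v = card {t \<in> {1..<n}. u \<le> t \<and> t < v}"
proof -
  have "{t \<in> {1..<n}. u \<le> t \<and> t < v} = {u..<v}" using assms by auto
  then show ?thesis using assms by (simp add: path_dist_def)
qed

lemma W_eq_sum_cuts: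
  assumes X: "X \<subseteq> {1..n}"
  shows "W X = (\<Sum>t\<in>{1..<n}. left_card X t * right_card X t)"
proof -
  have fin: "finite X" using X finite_subset by blast
  let ?cut = "\<lambda>u v t. if u \<le> t \<and> t < v then 1 else 0 :: nat"
  have "path_dist u v = (\<Sum>t\<in>{1..<n}. ?cut u v t)" if "u \<in> X" "v \<in> X" "u < v" for u v
  proof -
    have "1 \<le> u" "v \<le> n" using that X by auto
    then show ?thesis using path_dist_eq_card_cuts[of u v n] that by (simp add: sum.If_cases Int_def)
  qed
  then have "W X = (\<Sum>u\<in>X. \<Sum>v\<in>{v \<in> X. u < v}. \<Sum>t\<in>{1..<n}. ?cut u v t)"
    unfolding W_def by (intro sum.cong refl) auto
  also have "\<dots> = (\<Sum>u\<in>X. \<Sum>t\<in>{1..<n}. \<Sum>v\<in>{v \<in> X. u < v}. ?cut u v t)"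
    by (intro sum.cong refl sum.swap)
  also have "\<dots> = (\<Sum>t\<in>{1..<n}. \<Sum>u\<in>X. \<Sum>v\<in>{v \<in> X. u < v}. ?cut u v t)"
    by (rule sum.swap)
  also have "\<dots> = (\<Sum>t\<in>{1..<n}. \<Sum>u\<in>X. if u \<le> t then right_card X t else 0)"
  proof (intro sum.cong refl)
    fix t u
    have "{v \<in> {v \<in> X. u < v}. t < v} = {v \<in> X. t < v}" if "u \<le> t" using that by auto
    then show "(\<Sum>v\<in>{v \<in> X. u < v}. ?cut u v t) = (if u \<le> t then right_card X t else 0)"
      using fin by (simp add: sum.If_cases Int_def right_card_def)
  qed
  also have "\<dots> = (\<Sum>t\<in>{1..<n}. left_card X t * right_card X t)"
    using fin by (simp add: sum.If_cases left_card_def Int_def)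
  finally show ?thesis .
qed

lemma card_insert_Diff_swap:
  assumes "finite X" "u \<in> X" "v \<notin> X"
  shows "card (insert v (X - {u})) = card X"
  using assms by (metis card_Suc_Diff1 card_insert_disjoint finite_Diff Diff_iff)

lemma left_card_shift_right:
  assumes "finite X" "u \<in> X" "u + 1 \<notin> X"
  shows "left_card (insert (u + 1) (X - {u})) t = (if t = u then left_card X t - 1 else left_card X t)"
proof -
  consider "t < u" | "t = u" | "u < t" by linarith
  then show ?thesis
  proof cases
    case 1
    then have "{x \<in> insert (u + 1) (X - {u}). x \<le> t} = {x \<in> X. x \<le> t}" by auto
    then show ?thesis using 1 by (simp add: left_card_def)
  next
    case 2
    then have "{x \<in> insert (u + 1) (X - {u}). x \<le> t} = {x \<in> X. x \<le> t} - {u}" by auto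
    then show ?thesis using 2 assms by (simp add: left_card_def)
  next
    case 3
    then have "{x \<in> insert (u + 1) (X - {u}). x \<le> t} = insert (u + 1) ({x \<in> X. x \<le> t} - {u})"
      by auto
    then show ?thesis using 3 assms card_insert_Diff_swap[of "{x \<in> X. x \<le> t}" u "u + 1"]
      by (simp add: left_card_def)
  qed
qed

lemma left_card_pos:
  assumes "finite X" "u \<in> X"
  shows "0 < left_card X u"
  using assms by (auto simp: left_card_def card_gt_0_iff)

lemma W_shift_right:
  assumes X: "X \<subseteq> {1..n}" and u: "u \<in> X" "u + 1 \<notin> X" "u + 1 \<le> n"
  defines "Y \<equiv> insert (u + 1) (X - {u})"
  shows "W Y + left_card X u * right_card X u
           = W X + (left_card X u - 1) * (right_card X u + 1)"
proof -
  have fin: "finite X" using X finite_subset by blast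
  have Y: "Y \<subseteq> {1..n}" "finite Y" "card Y = card X"
    using X u fin card_insert_Diff_swap[OF fin u(1,2)] by (auto simp: Y_def)
  have lc: "left_card Y t = (if t = u then left_card X t - 1 else left_card X t)" for t
    unfolding Y_def by (rule left_card_shift_right[OF fin u(1,2)])
  have rc: "right_card Y t = card X - left_card Y t" "right_card X t = card X - left_card X t" for t
    using left_card_add_right_card[OF fin, of t] left_card_add_right_card[OF Y(2), of t] Y(3)
    by simp_all
  have pos: "0 < left_card X u" using left_card_pos[OF fin u(1)] .
  have "u \<in> {1..<n}" using X u by auto
  then have "W Y = left_card Y u * right_card Y u + (\<Sum>t\<in>{1..<n} - {u}. left_card X t * right_card X t)"
        and "W X = left_card X u * right_card X u + (\<Sum>t\<in>{1..<n} - {u}. left_card X t * right_card X t)"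
    using W_eq_sum_cuts[OF Y(1)] W_eq_sum_cuts[OF X] by (simp_all add: sum.remove lc rc)
  moreover have "left_card Y u = left_card X u - 1" "right_card Y u = right_card X u + 1"
    using lc rc pos left_card_add_right_card[OF fin, of u] by auto
  ultimately show ?thesis by simp
qed

definition locally_maximal :: "nat \<Rightarrow> (nat set \<Rightarrow> nat) \<Rightarrow> nat set \<Rightarrow> bool" where
  "locally_maximal n F R \<longleftrightarrow> (\<forall>Y \<in> perturbations n R. F Y \<le> F R)"

lemma insert_Diff_in_perturbations:
  assumes "R \<subseteq> {1..n}" "u \<in> R" "v \<in> {1..n} - R" "v = u + 1 \<or> u = v + 1"
  shows "insert v (R - {u}) \<in> perturbations n R"
proof -
  have "path_edge n u v" using assms by (auto simp: path_edge_def)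
  then show ?thesis
    using assms(2,3) unfolding perturbations_def path_vertices_def by auto
qed

lemma perturbation_subset_card:
  assumes X: "X \<subseteq> {1..n}" and P: "P \<in> perturbations n X"
  shows "P \<subseteq> {1..n}" "card P = card X"
proof -
  obtain u v where "P = insert v (X - {u})" "u \<in> X" "v \<in> {1..n} - X"
    using P unfolding perturbations_def path_vertices_def by auto
  then show "P \<subseteq> {1..n}" "card P = card X"
    using X card_insert_Diff_swap[of X u v] finite_subset[OF X] by auto
qed

lemma locally_maximal_shift_right:
  assumes R: "R \<subseteq> {1..n}" and max: "locally_maximal n W R"
    and u: "u \<in> R" "u + 1 \<notin> R" "u + 1 \<le> n"
  shows "left_card R u \<le> right_card R u + 1"
proof -
  have "insert (u + 1) (R - {u}) \<in> perturbations n R"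
    using R u by (intro insert_Diff_in_perturbations) auto
  then have "W (insert (u + 1) (R - {u})) \<le> W R" using max by (simp add: locally_maximal_def)
  moreover obtain a where a: "left_card R u = Suc a"
    using left_card_pos[OF finite_subset[OF R] u(1)] gr0_implies_Suc by blast
  ultimately show ?thesis
    using W_shift_right[OF R u] by simp
qed

lemma locally_maximal_shift_left:
  assumes R: "R \<subseteq> {1..n}" and max: "locally_maximal n W R"
    and u: "1 \<le> u" "u \<notin> R" "u + 1 \<in> R"
  shows "right_card R u \<le> left_card R u + 1"
proof -
  define Y where "Y = insert u (R - {u + 1})"
  have Y: "Y \<subseteq> {1..n}" "u \<in> Y" "u + 1 \<notin> Y" "u + 1 \<le> n" using R u by (auto simp: Y_def)
  have R_eq: "R = insert (u + 1) (Y - {u})" using u by (auto simp: Y_def)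
  have fin: "finite Y" "finite R" using Y(1) R finite_subset by auto
  have "Y \<in> perturbations n R"
    using R u unfolding Y_def by (intro insert_Diff_in_perturbations) auto
  then have "W Y \<le> W R" using max by (simp add: locally_maximal_def)
  moreover obtain a where a: "left_card Y u = Suc a"
    using left_card_pos[OF fin(1) Y(2)] gr0_implies_Suc by blast
  ultimately have "right_card Y u \<le> a"
    using W_shift_right[OF Y] R_eq by simp
  moreover have "left_card R u = a"
    using left_card_shift_right[OF fin(1) Y(2,3), of u] R_eq a by simp
  moreover have "card R = card Y"
    using card_insert_Diff_swap[OF fin(1) Y(2,3)] R_eq by simp
  ultimately show ?thesis
    using a left_card_add_right_card[OF fin(1), of u] left_card_add_right_card[OF fin(2), of u]
    by (simp add: algebra_simps)
qed

lemma left_card_le_right_card_if_gap_above: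
  assumes R: "R \<subseteq> {1..n}" and max: "locally_maximal n W R"
    and s: "t < s" "s \<le> n" "s \<notin> R"
  shows "left_card R t \<le> right_card R t + 1"
proof (cases "left_card R t = 0")
  case False
  have fin: "finite R" using R finite_subset by blast
  obtain x where x: "x \<in> R" "x \<le> t"
    using False unfolding left_card_def by (metis (no_types, lifting) Collect_empty_eq card.empty)
  \<comment> \<open>Shifting the last point u of R before the gap does not move any point across t.\<close>
  define S where "S = {y \<in> R. y < s}"
  define u where "u = Max S"
  have S: "finite S" "x \<in> S" using fin x s by (auto simp: S_def)
  have "u \<in> S" using S Max_in unfolding u_def by blast
  then have u: "u \<in> R" "u < s" by (auto simp: S_def)
  have below_u: "y \<le> u" if "y \<in> S" for y using S that by (simp add: u_def)
  have "u + 1 \<notin> R"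
  proof
    assume "u + 1 \<in> R"
    moreover from this have "u + 1 \<noteq> s" using s(3) by blast
    ultimately have "u + 1 \<in> S" using u by (simp add: S_def)
    then show False using below_u by fastforce
  qed
  then have "left_card R u \<le> right_card R u + 1"
    using locally_maximal_shift_right[OF R max u(1)] u s by simp
  moreover have "left_card R t \<le> left_card R u"
    unfolding left_card_def using fin s below_u by (intro card_mono) (auto simp: S_def)
  ultimately show ?thesis
    using left_card_add_right_card[OF fin, of t] left_card_add_right_card[OF fin, of u] by linarith
qed simp

lemma right_card_le_left_card_if_gap_below:
  assumes R: "R \<subseteq> {1..n}" and max: "locally_maximal n W R"
    and s: "1 \<le> s" "s \<le> t" "s \<notin> R"
  shows "right_card R t \<le> left_card R t + 1"
proof (cases "right_card R t = 0")
  case False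
  have fin: "finite R" using R finite_subset by blast
  obtain x where x: "x \<in> R" "t < x"
    using False unfolding right_card_def by (metis (no_types, lifting) Collect_empty_eq card.empty)
  define S where "S = {y \<in> R. s < y}"
  define u where "u = Min S - 1"
  have S: "finite S" "x \<in> S" using fin x s by (auto simp: S_def)
  have "Min S \<in> S" using S Min_in by blast
  then have u: "u + 1 \<in> R" "s \<le> u" by (auto simp: S_def u_def)
  have above_u: "u < y" if "y \<in> S" for y
  proof -
    have "Min S \<le> y" using S that by simp
    moreover have "s < Min S" using \<open>Min S \<in> S\<close> by (simp add: S_def)
    ultimately show ?thesis by (simp add: u_def)
  qed
  have "u \<notin> R"
  proof
    assume "u \<in> R"
    moreover from this have "u \<noteq> s" using s(3) by blast
    ultimately have "u \<in> S" using u by (simp add: S_def)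
    then show False using above_u by blast
  qed
  then have "right_card R u \<le> left_card R u + 1"
    using locally_maximal_shift_left[OF R max] u s by simp
  moreover have "right_card R t \<le> right_card R u"
    unfolding right_card_def using fin s above_u by (intro card_mono) (auto simp: S_def)
  ultimately show ?thesis
    using left_card_add_right_card[OF fin, of t] left_card_add_right_card[OF fin, of u] by linarith
qed simp

lemma mult_le_mult_if_sum_eq:
  fixes a b c d :: "'a::linordered_idom"
  assumes "b + d = a + c" and "\<bar>a - c\<bar> \<le> \<bar>b - d\<bar>"
  shows "b * d \<le> a * c"
proof -
  have "(a - c)\<^sup>2 \<le> (b - d)\<^sup>2" using assms(2) by (simp add: abs_le_square_iff)
  moreover have "4 * (b * d) = (b + d)\<^sup>2 - (b - d)\<^sup>2" "4 * (a * c) = (a + c)\<^sup>2 - (a - c)\<^sup>2"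
    by (simp_all add: power2_eq_square algebra_simps)
  ultimately show ?thesis using assms(1) by simp
qed

lemma cut_product_le_if_locally_maximal:
  assumes R: "R \<subseteq> {1..n}" and max: "locally_maximal n W R"
    and B: "B \<subseteq> {1..n}" "card B = card R"
  shows "left_card B t * right_card B t \<le> left_card R t * right_card R t"
proof -
  define a c b d where "a = left_card R t" "c = right_card R t" "b = left_card B t" "d = right_card B t"
  have sum: "b + d = a + c"
    using left_card_add_right_card[of R t] left_card_add_right_card[of B t]
      finite_subset[OF R] finite_subset[OF B(1)] B(2) by (simp add: a_c_b_d_def)
  consider "a \<le> c + 1" "c \<le> a + 1" | "c + 1 < a" | "a + 1 < c" by linarith
  then have "\<bar>int a - int c\<bar> \<le> \<bar>int b - int d\<bar>"
  proof cases
    case 1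
    show ?thesis
    proof (cases "a = c")
      case False
      with 1 have "a + c = 2 * min a c + 1" by linarith
      then have "b \<noteq> d" using sum by presburger
      then show ?thesis using 1 by linarith
    qed simp
  next
    case 2
    have "{t<..n} \<subseteq> R"
      using left_card_le_right_card_if_gap_above[OF R max] 2 by (force simp: a_c_b_d_def)
    then have "{x \<in> R. t < x} = {t<..n}" using R by auto
    moreover have "{x \<in> B. t < x} \<subseteq> {t<..n}" using B by auto
    ultimately have "d \<le> c"
      unfolding a_c_b_d_def right_card_def by (metis card_mono finite_greaterThanAtMost)
    then show ?thesis using 2 sum by linarith
  next
    case 3
    have "{1..t} \<subseteq> R"
      using right_card_le_left_card_if_gap_below[OF R max] 3 by (force simp: a_c_b_d_def)
    then have "{x \<in> R. x \<le> t} = {1..t}" using R by auto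
    moreover have "{x \<in> B. x \<le> t} \<subseteq> {1..t}" using B by auto
    ultimately have "b \<le> a"
      unfolding a_c_b_d_def left_card_def by (metis card_mono finite_atLeastAtMost)
    then show ?thesis using 3 sum by linarith
  qed
  then have "int b * int d \<le> int a * int c"
    using sum by (intro mult_le_mult_if_sum_eq) simp_all
  then show ?thesis by (simp add: a_c_b_d_def flip: of_nat_mult)
qed

lemma locally_maximal_imp_maximizer:
  assumes R: "R \<subseteq> {1..n}" and max: "locally_maximal n W R"
  shows "is_maximizer n R"
  unfolding is_maximizer_def path_vertices_def
proof (intro conjI allI impI)
  fix B assume B: "B \<subseteq> {1..n} \<and> card B = card R"
  then show "W B \<le> W R"
    unfolding W_eq_sum_cuts[OF R] W_eq_sum_cuts[of B n, OF conjunct1[OF B]]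
    using cut_product_le_if_locally_maximal[OF R max] by (intro sum_mono) blast
qed (rule R)

lemma als_returns_locally_maximal:
  assumes L: "valid_listing n L"
  shows "als_returns n F L X R \<Longrightarrow> X \<subseteq> {1..n} \<Longrightarrow>
           R \<subseteq> {1..n} \<and> card R = card X \<and> locally_maximal n F R"
proof (induction rule: als_returns.induct)
  case (stop X)
  have "F Y \<le> F X" if "Y \<in> perturbations n X" for Y
  proof -
    have "Y \<in> set (L X)" using L that by (simp add: valid_listing_def)
    then show ?thesis using stop.hyps by (metis in_set_conv_nth)
  qed
  then show ?case using stop.prems by (simp add: locally_maximal_def)
next
  case (step j X R)
  then have "L X ! j \<in> perturbations n X"
    using L nth_mem unfolding valid_listing_def by blast
  then show ?case using step perturbation_subset_card[OF step.prems] by simp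
qed

lemma als_returns_exists:
  assumes L: "valid_listing n L" and X: "X \<subseteq> {1..n}"
  shows "\<exists>R. als_returns n F L X R"
proof -
  define b where "b = Max (F ` Pow {1..n})"
  have bound: "F Y \<le> b" if "Y \<subseteq> {1..n}" for Y
    using that by (simp add: b_def)
  show ?thesis using X
  proof (induction "b - F X" arbitrary: X rule: less_induct)
    case less
    show ?case
    proof (cases "\<forall>i < length (L X). F (L X ! i) \<le> F X")
      case True
      then show ?thesis using als_returns.stop by blast
    next
      case False
      define P where "P j \<longleftrightarrow> j < length (L X) \<and> F X < F (L X ! j)" for j
      have "\<exists>j. P j" using False by (auto simp: P_def not_le)
      then obtain j where "P j" and not_P: "\<forall>i < j. \<not> P i" using exists_least_iff[of P] by blast
      then have j: "j < length (L X)" "F X < F (L X ! j)" by (simp_all add: P_def)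
      have first: "\<forall>i < j. F (L X ! i) \<le> F X" using not_P j(1) by (auto simp: P_def)
      have "L X ! j \<in> perturbations n X"
        using L j(1) nth_mem unfolding valid_listing_def by blast
      then have sub: "L X ! j \<subseteq> {1..n}" using perturbation_subset_card less.prems by blast
      have "b - F (L X ! j) < b - F X" using bound[OF sub] j(2) by linarith
      then obtain R where "als_returns n F L (L X ! j) R" using less.hyps[OF _ sub] by blast
      then show ?thesis using als_returns.step[where F = F and L = L and X = X] j first by blast
    qed
  qed
qed

theorem mainTheorem12:
  fixes n :: nat and A :: "nat set" and L :: "nat set \<Rightarrow> nat set list"
  assumes "A \<subseteq> path_vertices n"
    and "2 \<le> card A" and "card A \<le> n"
    and "valid_listing n L"
  shows "(\<exists>R. als_returns n W L A R) \<and>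
         (\<forall>R. als_returns n W L A R \<longrightarrow> is_maximizer n R)"
proof
  have A: "A \<subseteq> {1..n}" using assms(1) by (simp add: path_vertices_def)
  show "\<exists>R. als_returns n W L A R" using als_returns_exists[OF assms(4) A] .
  show "\<forall>R. als_returns n W L A R \<longrightarrow> is_maximizer n R"
    using als_returns_locally_maximal[OF assms(4) _ A] locally_maximal_imp_maximizer by blast
qed

end
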